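(* Fix $i\in\mathcal V$. Let $\mathbf u\in\mathcal A(b):=\{\mathbf w\in\mathbb R^{d+2}:0<\rho(\mathbf w)<b^{-1}\}$ and $\mathbf p\in\mathbb R^{d+2}$, and let $\ell_0>0$ be such that $\mathbf u+\ell_0\mathbf p\in\mathcal A(b)$. Define $f:[0,\ell_0]\to\mathbb R$ by $f(\ell)=\Phi_i^s(\mathbf u+\ell\mathbf p)$, where $$\Phi_i^s(\mathbf w)=\rho(\mathbf w)E(\mathbf w)-\tfrac12\|\mathbf m(\mathbf w)\|^2-S_i^{\min,n}\rho(\mathbf w)^{\gamma_i^{\min,n}+1}(1-b\rho(\mathbf w))^{1-\gamma_i^{\min,n}}.$$ Then the sign of $f'''(\ell)$ is constant over $[0,\ell_0]$ (i.e. $f''$ is monotone on $[0,\ell_0]$).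
   Context: Let $d\ge1$, $b\ge0$ (when $b=0$, read $b^{-1}=+\infty$). For $\mathbf w\in\mathbb R^{d+2}$, $\rho(\mathbf w)$ is its first component, $\mathbf m(\mathbf w)\in\mathbb R^d$ its components $2$ to $d+1$, $E(\mathbf w)$ its last component; for $\rho>0$, $e(\mathbf w)=E/\rho-\tfrac12\|\mathbf m/\rho\|^2$. Admissible set $\mathcal B(b)=\{\rho>0,\ 1-b\rho>0,\ e>0\}$. A pressure oracle $p:\mathcal B(b)\to[0,\infty)$ is given, with flux $\mathbb f(\mathbf w)=(\mathbf m,\ \frac{\mathbf m}{\rho}\otimes\mathbf m+p\,\mathbb I_d,\ \frac{\mathbf m}{\rho}(E+p))^{\mathsf T}$. Discretization: finite index set $\mathcal V$, stencils $\mathcal I(i)\ni i$, masses $m_i>0$, vectors $\mathbf c_{ij}\in\mathbb R^d$ ($\mathbf c_{ij}=-\mathbf c_{ji}$, $\sum_j\mathbf c_{ij}=0$, nonzero for $j\ne i$), $\mathbf n_{ij}=\mathbf c_{ij}/\|\mathbf c_{ij}\|$, states $\mathsf U_k^n=(\varrho_k^n,\mathsf M_k^n,\mathsf E_k^n)\in\mathcal B(b)$ for all $k$. $\gamma_k^n=1+\frac{p(\mathsf U_k^n)(1-b\varrho_k^n)}{\varrho_k^n e(\mathsf U_k^n)}$ and $\gamma_i^{\min,n}=\min_{j\in\mathcal I(i)}\gamma_j^n$ (so $\gamma_i^{\min,n}\ge1$). For $j\ne i$, $d_{ij}^{\mathrm L,n}=\max(\widehat\lambda(\mathbf n_{ij},\mathsf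 U_i^n,\mathsf U_j^n)\|\mathbf c_{ij}\|,\widehat\lambda(\mathbf n_{ji},\mathsf U_j^n,\mathsf U_i^n)\|\mathbf c_{ji}\|)$, where $\widehat\lambda$ is a positive upper bound on the maximum wave speed of the associated one-dimensional extended Riemann problem (any positive numbers are admissible for the present statement), and $\overline{\mathsf U}_{ij}^n=\tfrac12(\mathsf U_i^n+\mathsf U_j^n)-\frac{1}{2d_{ij}^{\mathrm L,n}}(\mathbb f(\mathsf U_j^n)-\mathbb f(\mathsf U_i^n))\mathbf c_{ij}$. With $S(\mathbf w,\gamma)=\frac{\rho e(\mathbf w)}{\rho^\gamma}(1-b\rho)^{\gamma-1}$, set $S_i^{\min,n}=\min\big(\min_{j\in\mathcal I(i)}S(\mathsf U_j^n,\gamma_i^{\min,n}),\min_{j\in\mathcal I(i)\setminus\{i\}}S(\overline{\mathsf U}_{ij}^n,\gamma_i^{\min,n})\big)$, which is a nonnegative constant in the setting of the paper (the auxiliary states lie in $\mathcal B(b)$). $\Phi_i^s(\mathbf w)=\rho(\mathbf w)\Psi_i^s(\mathbf w)$ where $\Psi_i^s(\mathbf w)=\rho e(\mathbf w)-S_i^{\min,n}\rho^{\gamma_i^{\min,n}}(1-b\rho)^{1-\gamma_i^{\min,n}}$. *)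

theory Defs
  imports "HOL-Analysis.Analysis"
begin

text \<open>States w in R^(d+2) are represented as triples (rho, m, E) with m in R^d,
  d = CARD('d).\<close>

type_synonym ('d) state = "real \<times> (real^('d::finite)) \<times> real"

definition rho :: "('d::finite) state \<Rightarrow> real" where "rho w = fst w"
definition mom :: "('d::finite) state \<Rightarrow> real^('d::finite)" where "mom w = fst (snd w)"
definition En :: "('d::finite) state \<Rightarrow> real" where "En w = snd (snd w)"

definition eint :: "('d::finite) state \<Rightarrow> real" where
  "eint w = En w / rho w - 1/2 * (norm ((1 / rho w) *\<^sub>R mom w))\<^sup>2"

definition admissible :: "real \<Rightarrow> ('d::finite) state \<Rightarrow> bool" where
  "admissible b w \<longleftrightarrow> rho w > 0 \<and> 1 - b * rho w > 0 \<and> eint w > 0"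

text \<open>A(b) = {w. 0 < rho w < 1/b} (no upper bound when b = 0).\<close>
definition A_set :: "real \<Rightarrow> ('d::finite) state set" where
  "A_set b = {w. 0 < rho w \<and> b * rho w < 1}"

text \<open>Flux f(w) applied to a vector c in R^d (f(w) c).\<close>
definition flux :: "( ('d::finite) state \<Rightarrow> real) \<Rightarrow> ('d::finite) state \<Rightarrow> real^('d::finite) \<Rightarrow> ('d::finite) state" where
  "flux p w c = (mom w \<bullet> c,
      ((mom w \<bullet> c) / rho w) *\<^sub>R mom w + p w *\<^sub>R c,
      ((mom w \<bullet> c) / rho w) * (En w + p w))"

definition gam :: "( ('d::finite) state \<Rightarrow> real) \<Rightarrow> real \<Rightarrow> ('d::finite) state \<Rightarrow> real" where
  "gam p b w = 1 + p w * (1 - b * rho w) / (rho w * eint w)"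

definition gamma_min ::
  "( ('d::finite) state \<Rightarrow> real) \<Rightarrow> real \<Rightarrow> ('v \<Rightarrow> 'v set) \<Rightarrow> ('v \<Rightarrow> ('d::finite) state) \<Rightarrow> 'v \<Rightarrow> real" where
  "gamma_min p b I U i = Min ((\<lambda>j. gam p b (U j)) ` I i)"

definition nvec :: "real^('d::finite) \<Rightarrow> real^('d::finite)" where
  "nvec c = (1 / norm c) *\<^sub>R c"

definition dL ::
  "(real^('d::finite) \<Rightarrow> ('d::finite) state \<Rightarrow> ('d::finite) state \<Rightarrow> real) \<Rightarrow> ('v \<Rightarrow> 'v \<Rightarrow> real^('d::finite))
    \<Rightarrow> ('v \<Rightarrow> ('d::finite) state) \<Rightarrow> 'v \<Rightarrow> 'v \<Rightarrow> real" where
  "dL lam c U i j = max (lam (nvec (c i j)) (U i) (U j) * norm (c i j))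
                        (lam (nvec (c j i)) (U j) (U i) * norm (c j i))"

definition Ubar ::
  "( ('d::finite) state \<Rightarrow> real) \<Rightarrow> (real^('d::finite) \<Rightarrow> ('d::finite) state \<Rightarrow> ('d::finite) state \<Rightarrow> real) \<Rightarrow> ('v \<Rightarrow> 'v \<Rightarrow> real^('d::finite))
    \<Rightarrow> ('v \<Rightarrow> ('d::finite) state) \<Rightarrow> 'v \<Rightarrow> 'v \<Rightarrow> ('d::finite) state" where
  "Ubar p lam c U i j = (1/2) *\<^sub>R (U i + U j)
     - (1 / (2 * dL lam c U i j)) *\<^sub>R (flux p (U j) (c i j) - flux p (U i) (c i j))"

definition Sfun :: "real \<Rightarrow> ('d::finite) state \<Rightarrow> real \<Rightarrow> real" where
  "Sfun b w g = rho w * eint w / (rho w powr g) * (1 - b * rho w) powr (g - 1)"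

definition S_min ::
  "( ('d::finite) state \<Rightarrow> real) \<Rightarrow> (real^('d::finite) \<Rightarrow> ('d::finite) state \<Rightarrow> ('d::finite) state \<Rightarrow> real) \<Rightarrow> real
    \<Rightarrow> ('v \<Rightarrow> 'v set) \<Rightarrow> ('v \<Rightarrow> 'v \<Rightarrow> real^('d::finite)) \<Rightarrow> ('v \<Rightarrow> ('d::finite) state) \<Rightarrow> 'v \<Rightarrow> real" where
  "S_min p lam b I c U i =
     min (Min ((\<lambda>j. Sfun b (U j) (gamma_min p b I U i)) ` I i))
         (Min ((\<lambda>j. Sfun b (Ubar p lam c U i j) (gamma_min p b I U i)) ` (I i - {i})))"

definition Phi_s :: "real \<Rightarrow> real \<Rightarrow> real \<Rightarrow> ('d::finite) state \<Rightarrow> real" where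
  "Phi_s b S g w = rho w * En w - 1/2 * (norm (mom w))\<^sup>2
      - S * rho w powr (g + 1) * (1 - b * rho w) powr (1 - g)"

end

theory Submission
  imports Defs
begin

text \<open>Along the line \<open>\<ell> \<mapsto> u + \<ell> p\<close> the density is affine and \<open>\<rho> E - |m|^2/2\<close> is a quadratic
  polynomial in \<open>\<ell>\<close>, so \<open>f''' = -S \<rho>(p)^3 G'''(\<rho>)\<close> with \<open>G(r) = r^(\<gamma>+1) (1 - b r)^(1-\<gamma>)\<close>.
  Writing \<open>G = w \<cdot> r (1 - b r)\<close> with \<open>w = r^\<gamma> (1 - b r)^(-\<gamma>)\<close>, whose logarithmic derivative is
  \<open>\<gamma> / (r (1 - b r))\<close>, three differentiations give \<open>G''' = (\<gamma>+1) \<gamma> (\<gamma>-1) w / (r (1 - b r))^2\<close>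
  with \<open>w \<ge> 0\<close>. On the segment, which stays in \<open>A(b)\<close> by convexity, \<open>f'''\<close> is therefore a
  nonnegative multiple of the constant \<open>-S (\<gamma>+1) \<gamma> (\<gamma>-1) \<rho>(p)^3\<close>.\<close>

definition covolume_weight :: "real \<Rightarrow> real \<Rightarrow> real \<Rightarrow> real" where
  "covolume_weight b g r = r powr g * (1 - b*r) powr (-g)"

definition covolume_power :: "real \<Rightarrow> real \<Rightarrow> real \<Rightarrow> real" where
  "covolume_power b g r = covolume_weight b g r * (r * (1 - b*r))"

lemma powr_eq_covolume_power:
  assumes "r > 0" "b*r < 1"
  shows "r powr (g + 1) * (1 - b*r) powr (1 - g) = covolume_power b g r"
proof -
  have "r powr (g + 1) = r powr g * r"
    using assms by (simp add: powr_add)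
  moreover have "(1 - b*r) powr (1 - g) = (1 - b*r) powr (-g) * (1 - b*r)"
    using assms powr_add[of "1 - b*r" "-g" 1] by simp
  ultimately show ?thesis by (simp add: covolume_power_def covolume_weight_def)
qed

lemma has_real_derivative_covolume_weight:
  assumes "r > 0" "b*r < 1"
  shows "DERIV (covolume_weight b g) r :> covolume_weight b g r * (g / (r * (1 - b*r)))"
  unfolding covolume_weight_def[abs_def]
  using assms by (auto intro!: derivative_eq_intros simp: powr_diff field_simps)

lemma has_real_derivative_covolume_weight_mult:
  assumes "r > 0" "b*r < 1" and "DERIV R r :> R'"
    and "g * R r / (r * (1 - b*r)) + R' = Q"
  shows "DERIV (\<lambda>x. covolume_weight b g x * R x) r :> covolume_weight b g r * Q"
  by (rule DERIV_cong[OF DERIV_mult[OF has_real_derivative_covolume_weight[OF assms(1,2)] assms(3)]])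
     (simp add: assms(4)[symmetric] algebra_simps)

lemma covolume_power_derivatives:
  fixes b g r :: real
  assumes r: "r > 0" "b*r < 1"
  defines "w \<equiv> covolume_weight b g"
  shows "DERIV (covolume_power b g) r :> w r * (g+1-2*b*r)"
    and "DERIV (\<lambda>r. w r * (g+1-2*b*r)) r
           :> w r * ((g*(g+1) - 2*(g+1)*b*r + 2*b^2*r^2) / (r*(1-b*r)))"
    and "DERIV (\<lambda>r. w r * ((g*(g+1) - 2*(g+1)*b*r + 2*b^2*r^2) / (r*(1-b*r)))) r
           :> w r * ((g+1)*g*(g-1) / (r*(1-b*r))^2)"
proof -
  have q: "1 - b*r \<noteq> 0" using r by simp
  show "DERIV (covolume_power b g) r :> w r * (g+1-2*b*r)"
    unfolding w_def covolume_power_def[abs_def]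
    by (rule has_real_derivative_covolume_weight_mult[OF r, where R' = "1 - 2*b*r"])
       (use r q in \<open>auto intro!: derivative_eq_intros simp: field_simps\<close>)
  show "DERIV (\<lambda>r. w r * (g+1-2*b*r)) r
           :> w r * ((g*(g+1) - 2*(g+1)*b*r + 2*b^2*r^2) / (r*(1-b*r)))"
    unfolding w_def
    by (rule has_real_derivative_covolume_weight_mult[OF r, where R' = "-2*b"])
       (use r q in \<open>auto intro!: derivative_eq_intros simp: field_simps power2_eq_square\<close>)
  show "DERIV (\<lambda>r. w r * ((g*(g+1) - 2*(g+1)*b*r + 2*b^2*r^2) / (r*(1-b*r)))) r
           :> w r * ((g+1)*g*(g-1) / (r*(1-b*r))^2)"
    unfolding w_def
  proof (rule has_real_derivative_covolume_weight_mult[OF r])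
    show "DERIV (\<lambda>r. (g*(g+1) - 2*(g+1)*b*r + 2*b^2*r^2) / (r*(1-b*r))) r
      :> ((4*b^2*r - 2*(g+1)*b) * (r*(1-b*r)) - (g*(g+1) - 2*(g+1)*b*r + 2*b^2*r^2) * (1-2*b*r))
           / (r*(1-b*r))^2"
      using r q by (auto intro!: derivative_eq_intros simp: algebra_simps power2_eq_square)
    show "g * ((g*(g+1) - 2*(g+1)*b*r + 2*b^2*r^2) / (r*(1-b*r))) / (r*(1-b*r))
      + ((4*b^2*r - 2*(g+1)*b) * (r*(1-b*r)) - (g*(g+1) - 2*(g+1)*b*r + 2*b^2*r^2) * (1-2*b*r))
           / (r*(1-b*r))^2
      = (g+1)*g*(g-1) / (r*(1-b*r))^2"
      using r q by (simp add: divide_simps power2_eq_square) algebra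
  qed
qed

lemma higher_deriv_Suc_eq_on_open:
  assumes "open T" "x \<in> T" "\<And>y. y \<in> T \<Longrightarrow> DERIV f y :> f' y"
  shows "(deriv ^^ Suc n) f x = (deriv ^^ n) f' x"
proof -
  have "eventually (\<lambda>y. deriv f y = f' y) (nhds x)"
    using eventually_nhds_in_open[OF assms(1,2)]
    by eventually_elim (use assms(3) DERIV_imp_deriv in blast)
  then show ?thesis
    unfolding funpow_Suc_right comp_def by (rule higher_deriv_cong_ev) simp
qed

lemma higher_deriv3_quadratic_minus_comp_affine:
  fixes G G' G'' G''' :: "real \<Rightarrow> real"
  assumes T: "open T" "l \<in> T"
    and f: "\<And>l. l \<in> T \<Longrightarrow> f l = a0 + a1*l + a2*l^2 - S * G (r0 + l*P)"
    and G: "\<And>l. l \<in> T \<Longrightarrow> DERIV G (r0 + l*P) :> G' (r0 + l*P)"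
    and G': "\<And>l. l \<in> T \<Longrightarrow> DERIV G' (r0 + l*P) :> G'' (r0 + l*P)"
    and G'': "\<And>l. l \<in> T \<Longrightarrow> DERIV G'' (r0 + l*P) :> G''' (r0 + l*P)"
  shows "(deriv ^^ 3) f l = - S * P^3 * G''' (r0 + l*P)"
proof -
  have chain: "DERIV (\<lambda>l. H (r0 + l*P)) l :> H' (r0 + l*P) * P"
    if "DERIV H (r0 + l*P) :> H' (r0 + l*P)" for H H' l
    by (rule DERIV_chain2[where g = "\<lambda>l. r0 + l*P", OF that]) (auto intro!: derivative_eq_intros)
  have "eventually (\<lambda>l. f l = a0 + a1*l + a2*l^2 - S * G (r0 + l*P)) (nhds l)"
    using eventually_nhds_in_open[OF T] by eventually_elim (rule f)
  then have "(deriv ^^ 3) f l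
      = (deriv ^^ Suc (Suc (Suc 0))) (\<lambda>l. a0 + a1*l + a2*l^2 - S * G (r0 + l*P)) l"
    unfolding numeral_3_eq_3 by (rule higher_deriv_cong_ev) simp
  also have "\<dots> = (deriv ^^ Suc (Suc 0)) (\<lambda>l. a1 + 2*a2*l - S * (G' (r0 + l*P) * P)) l"
    using T by (rule higher_deriv_Suc_eq_on_open) (auto intro!: derivative_eq_intros chain G)
  also have "\<dots> = (deriv ^^ Suc 0) (\<lambda>l. 2*a2 - S * (G'' (r0 + l*P) * P * P)) l"
    using T by (rule higher_deriv_Suc_eq_on_open) (auto intro!: derivative_eq_intros chain G')
  also have "\<dots> = - S * (G''' (r0 + l*P) * P * P * P)"
    using T by (subst higher_deriv_Suc_eq_on_open) (auto intro!: derivative_eq_intros chain G'')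
  finally show ?thesis by (simp add: power3_eq_cube mult_ac)
qed

lemma convex_A_set: "convex (A_set b :: 'd::finite state set)"
proof -
  have "A_set b = {w :: 'd state. (1, 0, 0) \<bullet> w > 0} \<inter> {w. (b, 0, 0) \<bullet> w < 1}"
    by (auto simp: A_set_def rho_def inner_prod_def)
  then show ?thesis
    by (simp add: convex_Int convex_halfspace_gt convex_halfspace_lt)
qed

lemma line_in_A_set:
  assumes "u \<in> A_set b" "u + l0 *\<^sub>R pv \<in> A_set b" "l \<in> {0..l0}"
  shows "u + l *\<^sub>R pv \<in> A_set b"
proof (cases "l0 = 0")
  case True
  with assms show ?thesis by simp
next
  case False
  have "(1 - l/l0) *\<^sub>R u + (l/l0) *\<^sub>R (u + l0 *\<^sub>R pv) \<in> A_set b"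
    using assms False by (intro convexD[OF convex_A_set]) (auto simp: field_simps)
  moreover have "(1 - l/l0) *\<^sub>R u + (l/l0) *\<^sub>R (u + l0 *\<^sub>R pv) = u + l *\<^sub>R pv"
    using False by (simp add: algebra_simps)
  ultimately show ?thesis by simp
qed

lemma Phi_s_along_line:
  fixes u pv :: "'d::finite state"
  obtains a0 a1 a2 where
    "\<And>l. u + l *\<^sub>R pv \<in> A_set b \<Longrightarrow>
      Phi_s b S g (u + l *\<^sub>R pv) = a0 + a1*l + a2*l^2 - S * covolume_power b g (rho u + l * rho pv)"
proof
  fix l assume "u + l *\<^sub>R pv \<in> A_set b"
  then have "rho u + l * rho pv > 0" "b * (rho u + l * rho pv) < 1"
    by (simp_all add: A_set_def rho_def)
  moreover have "(norm (mom u + l *\<^sub>R mom pv))^2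
      = (norm (mom u))^2 + 2 * l * (mom u \<bullet> mom pv) + l^2 * (norm (mom pv))^2"
    unfolding power2_norm_eq_inner
    by (simp add: inner_commute algebra_simps power2_eq_square)
  ultimately show "Phi_s b S g (u + l *\<^sub>R pv)
    = (rho u * En u - (norm (mom u))^2/2) + (rho u * En pv + rho pv * En u - mom u \<bullet> mom pv) * l
      + (rho pv * En pv - (norm (mom pv))^2/2) * l^2 - S * covolume_power b g (rho u + l * rho pv)"
    by (simp add: Phi_s_def rho_def mom_def En_def powr_eq_covolume_power[symmetric] mult.assoc)
      (simp add: algebra_simps power2_eq_square)
qed

lemma Phi_s_third_deriv_along_line:
  fixes u pv :: "'d::finite state"
  assumes "u + l *\<^sub>R pv \<in> A_set b"
  shows "(deriv ^^ 3) (\<lambda>l. Phi_s b S g (u + l *\<^sub>R pv)) l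
    = - S * ((g+1)*g*(g-1)) * rho pv ^ 3 * (covolume_weight b g (rho u + l * rho pv)
        / ((rho u + l * rho pv) * (1 - b * (rho u + l * rho pv)))^2)"
proof -
  define T where "T = {l. u + l *\<^sub>R pv \<in> A_set b}"
  have T_eq: "T = {l. 0 < rho u + l * rho pv \<and> b * (rho u + l * rho pv) < 1}"
    by (simp add: T_def A_set_def rho_def)
  have "open T"
    unfolding T_eq by (intro open_Collect_conj open_Collect_less continuous_intros)
  have "l \<in> T"
    using assms by (simp add: T_def)
  have line_domain: "rho u + l * rho pv > 0" "b * (rho u + l * rho pv) < 1" if "l \<in> T" for l
    using that by (simp_all add: T_eq)
  obtain a0 a1 a2 where Phi: "\<And>l. l \<in> T \<Longrightarrow>
      Phi_s b S g (u + l *\<^sub>R pv) = a0 + a1*l + a2*l^2 - S * covolume_power b g (rho u + l * rho pv)"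
    using Phi_s_along_line unfolding T_def by (metis mem_Collect_eq)
  have "(deriv ^^ 3) (\<lambda>l. Phi_s b S g (u + l *\<^sub>R pv)) l
    = - S * rho pv ^ 3 * (covolume_weight b g (rho u + l * rho pv)
        * ((g+1)*g*(g-1) / ((rho u + l * rho pv) * (1 - b * (rho u + l * rho pv)))^2))"
    by (rule higher_deriv3_quadratic_minus_comp_affine[OF \<open>open T\<close> \<open>l \<in> T\<close> Phi, where
          G' = "\<lambda>r. covolume_weight b g r * (g+1-2*b*r)" and
          G'' = "\<lambda>r. covolume_weight b g r * ((g*(g+1) - 2*(g+1)*b*r + 2*b^2*r^2) / (r*(1-b*r)))"])
       (use covolume_power_derivatives[OF line_domain] in auto)
  then show ?thesis by (simp add: mult_ac)
qed

theorem lemma4p6: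
  fixes V :: "'v set" and I :: "'v \<Rightarrow> 'v set" and ms :: "'v \<Rightarrow> real"
    and c :: "'v \<Rightarrow> 'v \<Rightarrow> real^'d" and U :: "'v \<Rightarrow> 'd state"
    and p :: "'d state \<Rightarrow> real" and lam :: "real^'d \<Rightarrow> 'd state \<Rightarrow> 'd state \<Rightarrow> real"
    and b :: real and i :: 'v and u pv :: "'d state" and l0 :: real
  assumes b: "b \<ge> 0"
    and V: "finite V"
    and I: "\<And>k. k \<in> V \<Longrightarrow> I k \<subseteq> V \<and> k \<in> I k"
    and masses: "\<And>k. k \<in> V \<Longrightarrow> ms k > 0"
    and c_anti: "\<And>k j. k \<in> V \<Longrightarrow> j \<in> I k \<Longrightarrow> c k j = - c j k"
    and c_sum: "\<And>k. k \<in> V \<Longrightarrow> (\<Sum>j\<in>I k. c k j) = 0"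
    and c_nz: "\<And>k j. k \<in> V \<Longrightarrow> j \<in> I k \<Longrightarrow> j \<noteq> k \<Longrightarrow> c k j \<noteq> 0"
    and p_nonneg: "\<And>w. admissible b w \<Longrightarrow> p w \<ge> 0"
    and lam_pos: "\<And>n w1 w2. lam n w1 w2 > 0"
    and U_adm: "\<And>k. k \<in> V \<Longrightarrow> admissible b (U k)"
    and Ubar_adm: "\<And>j. j \<in> I i \<Longrightarrow> j \<noteq> i \<Longrightarrow> admissible b (Ubar p lam c U i j)"
    and i: "i \<in> V"
    and u: "u \<in> A_set b"
    and l0: "l0 > 0"
    and ul0: "u + l0 *\<^sub>R pv \<in> A_set b"
  shows "let f = (\<lambda>l. Phi_s b (S_min p lam b I c U i) (gamma_min p b I U i) (u + l *\<^sub>R pv))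
         in (\<forall>l\<in>{0..l0}. (deriv ^^ 3) f l \<ge> 0) \<or> (\<forall>l\<in>{0..l0}. (deriv ^^ 3) f l \<le> 0)"
proof -
  define S where "S = S_min p lam b I c U i"
  define g where "g = gamma_min p b I U i"
  define K where "K = - S * ((g+1)*g*(g-1)) * rho pv ^ 3"
  define z where "z l = covolume_weight b g (rho u + l * rho pv)
    / ((rho u + l * rho pv) * (1 - b * (rho u + l * rho pv)))^2" for l
  have third: "(deriv ^^ 3) (\<lambda>l. Phi_s b S g (u + l *\<^sub>R pv)) l = K * z l" if "l \<in> {0..l0}" for l
    using Phi_s_third_deriv_along_line[OF line_in_A_set[OF u ul0 that]] by (simp add: K_def z_def)
  have "z l \<ge> 0" for l
    by (simp add: z_def covolume_weight_def)
  then show ?thesis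
    unfolding Let_def S_def[symmetric] g_def[symmetric]
    using third by (cases "K \<ge> 0") (auto intro: mult_nonpos_nonneg)
qed

end
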